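(* For all $t>0$ and all Borel $V:\mathbb{R}^d\to\mathbb{R}$, $$r_*(V,t/2)\le(4\pi)^{-d/2}\|N(V,t)\|_\infty\le 2\,r_*(V,t/2).$$
   Context: $g(t,x,y)=(4\pi t)^{-d/2}e^{-|y-x|^2/(4t)}$; for $\alpha\in\mathbb{R}^d$, $p_\alpha(t,x,y)=g(t,x-2\alpha t,y)$. $r_*(V,t)=\sup_{\alpha,x\in\mathbb{R}^d}\int_0^t\int_{\mathbb{R}^d}p_\alpha(s,x,z)|V(z)|\,dz\,ds$. $N(V,t,x,y)=\int_0^{t/2}\int_{\mathbb{R}^d}\tau^{-d/2}e^{-|z-y+(\tau/t)(y-x)|^2/(4\tau)}|V(z)|\,dz\,d\tau+\int_{t/2}^t\int_{\mathbb{R}^d}(t-\tau)^{-d/2}e^{-|z-y+(\tau/t)(y-x)|^2/(4(t-\tau))}|V(z)|\,dz\,d\tau$, and $\|N(V,t)\|_\infty=\sup_{x,y\in\mathbb{R}^d}N(V,t,x,y)$. *)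

theory Defs
  imports "HOL-Analysis.Analysis"
begin

definition gauss :: "real \<Rightarrow> 'a::euclidean_space \<Rightarrow> 'a \<Rightarrow> real" where
  "gauss t x y = (4 * pi * t) powr (- real DIM('a) / 2) * exp (- (norm (y - x))\<^sup>2 / (4 * t))"

definition pdrift :: "'a::euclidean_space \<Rightarrow> real \<Rightarrow> 'a \<Rightarrow> 'a \<Rightarrow> real" where
  "pdrift \<alpha> t x y = gauss t (x - (2 * t) *\<^sub>R \<alpha>) y"

definition rstar :: "('a::euclidean_space \<Rightarrow> real) \<Rightarrow> real \<Rightarrow> ennreal" where
  "rstar V t = (SUP (\<alpha>, x) \<in> UNIV.
      \<integral>\<^sup>+ s. indicator {0<..<t} s *
        (\<integral>\<^sup>+ z. ennreal (pdrift \<alpha> s x z * \<bar>V z\<bar>) \<partial>lborel) \<partial>lborel)"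

definition Nfun :: "('a::euclidean_space \<Rightarrow> real) \<Rightarrow> real \<Rightarrow> 'a \<Rightarrow> 'a \<Rightarrow> ennreal" where
  "Nfun V t x y =
     (\<integral>\<^sup>+ \<tau>. indicator {0<..<t/2} \<tau> *
        (\<integral>\<^sup>+ z. ennreal (\<tau> powr (- real DIM('a) / 2) *
             exp (- (norm (z - y + (\<tau> / t) *\<^sub>R (y - x)))\<^sup>2 / (4 * \<tau>)) * \<bar>V z\<bar>) \<partial>lborel) \<partial>lborel)
   + (\<integral>\<^sup>+ \<tau>. indicator {t/2..<t} \<tau> *
        (\<integral>\<^sup>+ z. ennreal ((t - \<tau>) powr (- real DIM('a) / 2) *
             exp (- (norm (z - y + (\<tau> / t) *\<^sub>R (y - x)))\<^sup>2 / (4 * (t - \<tau>))) * \<bar>V z\<bar>) \<partial>lborel) \<partial>lborel)"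

definition Nsup :: "('a::euclidean_space \<Rightarrow> real) \<Rightarrow> real \<Rightarrow> ennreal" where
  "Nsup V t = (SUP (x, y) \<in> UNIV. Nfun V t x y)"

end

theory Submission
  imports Defs
begin

text \<open>Up to the factor \<open>(4\<pi>)^{-d/2}\<close>, the first half of \<open>N(V,t,x,y)\<close> is the drifted heat
  potential of \<open>|V|\<close> started at \<open>y\<close> with drift \<open>\<alpha> = (y - x)/(2t)\<close>, over the time interval
  \<open>(0,t/2)\<close>; after the substitution \<open>\<tau> \<mapsto> t - \<tau>\<close> the second half is the same with the
  roles of \<open>x\<close> and \<open>y\<close> exchanged. Hence \<open>(4\<pi>)^{-d/2} N(V,t,x,y)\<close> is a sum of two of the
  quantities whose supremum is \<open>r_*(V,t/2)\<close>, which gives the upper bound; conversely every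
  such quantity arises as the first summand for a suitable pair \<open>x, y\<close>, the second summand
  being nonnegative.\<close>

definition drift_potential :: "('a::euclidean_space \<Rightarrow> real) \<Rightarrow> real \<Rightarrow> 'a \<Rightarrow> 'a \<Rightarrow> ennreal" where
  "drift_potential V T \<alpha> x =
     (\<integral>\<^sup>+ s. indicator {0<..<T} s * (\<integral>\<^sup>+ z. ennreal (pdrift \<alpha> s x z * \<bar>V z\<bar>) \<partial>lborel) \<partial>lborel)"

lemma rstar_eq_SUP_drift_potential: "rstar V T = (SUP (\<alpha>, x) \<in> UNIV. drift_potential V T \<alpha> x)"
  unfolding rstar_def drift_potential_def ..

lemma pdrift_eq_mult:
  fixes \<alpha> w z :: "'a::euclidean_space"
  assumes "s > 0"
  shows "pdrift \<alpha> s w z = (4 * pi) powr (- real DIM('a) / 2) *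
     (s powr (- real DIM('a) / 2) * exp (- (norm (z - w + (2 * s) *\<^sub>R \<alpha>))\<^sup>2 / (4 * s)))"
proof -
  have "(4 * pi * s) powr (- real DIM('a) / 2) =
      (4 * pi) powr (- real DIM('a) / 2) * s powr (- real DIM('a) / 2)"
    using assms by (simp add: powr_mult)
  moreover have "z - (w - (2 * s) *\<^sub>R \<alpha>) = z - w + (2 * s) *\<^sub>R \<alpha>"
    by (simp add: algebra_simps)
  ultimately show ?thesis
    unfolding pdrift_def gauss_def by (simp only: mult.assoc)
qed

lemma nn_integral_pdrift_eq_cmult:
  fixes V :: "'a::euclidean_space \<Rightarrow> real" and \<alpha> w :: 'a
  assumes "s > 0" and [measurable]: "V \<in> borel_measurable borel"
  shows "(\<integral>\<^sup>+ z. ennreal (pdrift \<alpha> s w z * \<bar>V z\<bar>) \<partial>lborel) =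
    ennreal ((4 * pi) powr (- real DIM('a) / 2)) *
    (\<integral>\<^sup>+ z. ennreal (s powr (- real DIM('a) / 2) *
       exp (- (norm (z - w + (2 * s) *\<^sub>R \<alpha>))\<^sup>2 / (4 * s)) * \<bar>V z\<bar>) \<partial>lborel)"
proof -
  have "(\<integral>\<^sup>+ z. ennreal (pdrift \<alpha> s w z * \<bar>V z\<bar>) \<partial>lborel) =
    (\<integral>\<^sup>+ z. ennreal ((4 * pi) powr (- real DIM('a) / 2)) * ennreal (s powr (- real DIM('a) / 2) *
       exp (- (norm (z - w + (2 * s) *\<^sub>R \<alpha>))\<^sup>2 / (4 * s)) * \<bar>V z\<bar>) \<partial>lborel)"
    by (intro nn_integral_cong)
      (simp add: pdrift_eq_mult[OF assms(1)] ennreal_mult[symmetric] mult.assoc)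
  also have "\<dots> = ennreal ((4 * pi) powr (- real DIM('a) / 2)) *
    (\<integral>\<^sup>+ z. ennreal (s powr (- real DIM('a) / 2) *
       exp (- (norm (z - w + (2 * s) *\<^sub>R \<alpha>))\<^sup>2 / (4 * s)) * \<bar>V z\<bar>) \<partial>lborel)"
    by (rule nn_integral_cmult) measurable
  finally show ?thesis .
qed

lemma cmult_nn_integral_eq_drift_potential:
  fixes V :: "'a::euclidean_space \<Rightarrow> real" and v w :: 'a
  assumes t: "t > 0" and [measurable]: "V \<in> borel_measurable borel"
  shows "ennreal ((4 * pi) powr (- real DIM('a) / 2)) *
     (\<integral>\<^sup>+ \<tau>. indicator {0<..<T} \<tau> *
        (\<integral>\<^sup>+ z. ennreal (\<tau> powr (- real DIM('a) / 2) *
             exp (- (norm (z - w + (\<tau> / t) *\<^sub>R v))\<^sup>2 / (4 * \<tau>)) * \<bar>V z\<bar>) \<partial>lborel) \<partial>lborel)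
   = drift_potential V T ((1 / (2 * t)) *\<^sub>R v) w"
proof -
  have drift: "(2 * s) *\<^sub>R ((1 / (2 * t)) *\<^sub>R v) = (s / t) *\<^sub>R v" for s
    using t by simp
  show ?thesis
    unfolding drift_potential_def
    by (subst nn_integral_cmult[symmetric], measurable)
      (auto intro!: nn_integral_cong simp: indicator_def nn_integral_pdrift_eq_cmult drift)
qed

lemma Nfun_second_half_reflect:
  fixes V :: "'a::euclidean_space \<Rightarrow> real" and x y :: 'a
  assumes t: "t > 0" and [measurable]: "V \<in> borel_measurable borel"
  shows "(\<integral>\<^sup>+ \<tau>. indicator {t/2..<t} \<tau> *
        (\<integral>\<^sup>+ z. ennreal ((t - \<tau>) powr (- real DIM('a) / 2) *
             exp (- (norm (z - y + (\<tau> / t) *\<^sub>R (y - x)))\<^sup>2 / (4 * (t - \<tau>))) * \<bar>V z\<bar>) \<partial>lborel) \<partial>lborel)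
   = (\<integral>\<^sup>+ \<sigma>. indicator {0<..<t/2} \<sigma> *
        (\<integral>\<^sup>+ z. ennreal (\<sigma> powr (- real DIM('a) / 2) *
             exp (- (norm (z - x + (\<sigma> / t) *\<^sub>R (x - y)))\<^sup>2 / (4 * \<sigma>)) * \<bar>V z\<bar>) \<partial>lborel) \<partial>lborel)"
    (is "(\<integral>\<^sup>+ \<tau>. ?f \<tau> \<partial>lborel) = _")
proof -
  have [measurable]: "?f \<in> borel_measurable borel"
    by measurable
  have shift: "z - y + ((t - \<sigma>) / t) *\<^sub>R (y - x) = z - x + (\<sigma> / t) *\<^sub>R (x - y)" for z \<sigma>
    using t by (simp add: diff_divide_distrib algebra_simps)
  have "(\<integral>\<^sup>+ \<tau>. ?f \<tau> \<partial>lborel) = ennreal \<bar>-1\<bar> * (\<integral>\<^sup>+ \<sigma>. ?f (t + -1 * \<sigma>) \<partial>lborel)"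
    by (rule nn_integral_real_affine) measurable
  also have "\<dots> = (\<integral>\<^sup>+ \<sigma>. indicator {0<..<t/2} \<sigma> *
        (\<integral>\<^sup>+ z. ennreal (\<sigma> powr (- real DIM('a) / 2) *
             exp (- (norm (z - x + (\<sigma> / t) *\<^sub>R (x - y)))\<^sup>2 / (4 * \<sigma>)) * \<bar>V z\<bar>) \<partial>lborel) \<partial>lborel)"
    \<comment> \<open>the reflected interval \<open>(0,t/2]\<close> differs from \<open>(0,t/2)\<close> by the null set \<open>{t/2}\<close>\<close>
    by simp (intro nn_integral_cong_AE eventually_mono[OF AE_lborel_singleton[of "t/2"]],
      auto simp: indicator_def shift)
  finally show ?thesis .
qed

lemma cmult_Nfun_eq_drift_potentials:
  fixes V :: "'a::euclidean_space \<Rightarrow> real" and x y :: 'a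
  assumes "t > 0" and "V \<in> borel_measurable borel"
  shows "ennreal ((4 * pi) powr (- real DIM('a) / 2)) * Nfun V t x y =
    drift_potential V (t/2) ((1 / (2 * t)) *\<^sub>R (y - x)) y +
    drift_potential V (t/2) ((1 / (2 * t)) *\<^sub>R (x - y)) x"
  unfolding Nfun_def distrib_left Nfun_second_half_reflect[OF assms]
    cmult_nn_integral_eq_drift_potential[OF assms] ..

theorem lemma2p1:
  fixes V :: "'a::euclidean_space \<Rightarrow> real" and t :: real
  assumes "t > 0" and "V \<in> borel_measurable borel"
  shows "rstar V (t/2) \<le> ennreal ((4 * pi) powr (- real DIM('a) / 2)) * Nsup V t
       \<and> ennreal ((4 * pi) powr (- real DIM('a) / 2)) * Nsup V t \<le> 2 * rstar V (t/2)"
proof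
  define c where "c = ennreal ((4 * pi) powr (- real DIM('a) / 2))"
  have cN: "c * Nfun V t x y = drift_potential V (t/2) ((1 / (2 * t)) *\<^sub>R (y - x)) y +
      drift_potential V (t/2) ((1 / (2 * t)) *\<^sub>R (x - y)) x" for x y
    unfolding c_def by (rule cmult_Nfun_eq_drift_potentials[OF assms])
  have le_rstar: "drift_potential V (t/2) \<alpha> x \<le> rstar V (t/2)" for \<alpha> x
    unfolding rstar_eq_SUP_drift_potential by (rule SUP_upper2[of "(\<alpha>, x)"]) auto
  show "rstar V (t/2) \<le> c * Nsup V t"
    unfolding rstar_eq_SUP_drift_potential
  proof (safe intro!: SUP_least)
    fix \<alpha> x :: 'a
    have "(1 / (2 * t)) *\<^sub>R (x - (x - (2 * t) *\<^sub>R \<alpha>)) = \<alpha>"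
      using assms(1) by simp
    then have "drift_potential V (t/2) \<alpha> x \<le> c * Nfun V t (x - (2 * t) *\<^sub>R \<alpha>) x"
      unfolding cN by simp
    also have "\<dots> \<le> c * Nsup V t"
      unfolding Nsup_def by (intro mult_left_mono SUP_upper2[of "(x - (2 * t) *\<^sub>R \<alpha>, x)"]) auto
    finally show "drift_potential V (t/2) \<alpha> x \<le> c * Nsup V t" .
  qed
  have "c * Nfun V t x y \<le> 2 * rstar V (t/2)" for x y
    unfolding cN mult_2 by (intro add_mono le_rstar)
  then show "c * Nsup V t \<le> 2 * rstar V (t/2)"
    unfolding Nsup_def by (auto simp: SUP_mult_left_ennreal intro!: SUP_least)
qed

end
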